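(* Let $\mathbf G$ be a group, let $G_{<\infty}$ be the set of its elements of finite order, and let $\Phi$ be the finite-order component of $\mathcal G(\mathbf G)$. Assume $\lvert\mathrm{Cen}(\Phi)\rvert=1$. Let $x\in G_{<\infty}$ be such that the $\equiv$-class $[x]_\equiv$ of $x$ in $\Phi$ is not a single $\approx$-class (i.e. $[x]_\equiv$ is a complex or infinitely complex $\equiv$-class). Then the closed neighborhood of $x$ in $\mathcal G(\mathbf G)$ equals the closed neighborhood of $x$ in $\mathcal G_e(\mathbf G)$.
   Context: All graphs are simple. For a group $\mathbf G$: the power graph $\mathcal G(\mathbf G)$ has vertex set $G$, and distinct $x,y$ are adjacent iff $y=x^n$ or $x=y^n$ for some $n\in\mathbb Z\setminus\{0\}$ (so the identity is not adjacent to elements of infinite order). The enhanced power graph $\mathcal G_e(\mathbf G)$ has vertex set $G$, and distinct $x,y$ are adjacent iff there are $z\in G$ and $n,m\in\mathbb Z$ with $x=z^n$, $y=z^m$ (equivalently $\langle x,y\rangle$ is cyclic). $G_{<\infty}$ denotes the set of elements of finite order; it induces a connected component of $\mathcal G(\mathbf G)$, called the finite-order component $\Phi$. The center of $\Phi$ is $\mathrm{Cen}(\Phi)=\{x\in G_{<\infty}: x \text{ is adjacent in } \mathcal G(\mathbf G) \text{ to all } y\in G_{<\infty}\setminus\{x\}\}$. The closed neighborhood of a vertex $x$ is $\overline N(x)=\{x\}\cup\{y: y\sim x\}$. For $x,y\in G_{<\infty}$, $x\equiv y$ means $x,y$ have the same closed neighborhood in $\Phi$; $x\approx y$ means $\langle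 x\rangle=\langle y\rangle$. Each $\equiv$-class is a union of $\approx$-classes. (Under $\lvert\mathrm{Cen}(\Phi)\rvert=1$, a $\equiv$-class that is not a single $\approx$-class is either complex, i.e. of the form $\{g\in\langle y\rangle: o(g)\ge p^s\}$ for a prime $p$, an element $y$ of order $p^r$ and $r>s>0$, or infinitely complex, i.e. $\bigcup_{k\ge s}[x_k]_\approx$ with $o(x_k)=p^k$ and $x_k\in\langle x_{k+1}\rangle$ for all $k\ge s$.) *)

theory Defs
  imports "HOL-Algebra.Algebra"
begin

definition pow_adj :: "('a, 'b) monoid_scheme \<Rightarrow> 'a \<Rightarrow> 'a \<Rightarrow> bool" where
  "pow_adj G x y \<longleftrightarrow> x \<in> carrier G \<and> y \<in> carrier G \<and> x \<noteq> y \<and>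
     ((\<exists>n::int. n \<noteq> 0 \<and> y = x [^]\<^bsub>G\<^esub> n) \<or> (\<exists>n::int. n \<noteq> 0 \<and> x = y [^]\<^bsub>G\<^esub> n))"

text \<open>Adjacency in the enhanced power graph.\<close>
definition epow_adj :: "('a, 'b) monoid_scheme \<Rightarrow> 'a \<Rightarrow> 'a \<Rightarrow> bool" where
  "epow_adj G x y \<longleftrightarrow> x \<in> carrier G \<and> y \<in> carrier G \<and> x \<noteq> y \<and>
     (\<exists>z\<in>carrier G. \<exists>(n::int) (m::int). x = z [^]\<^bsub>G\<^esub> n \<and> y = z [^]\<^bsub>G\<^esub> m)"

definition fin_ord :: "('a, 'b) monoid_scheme \<Rightarrow> 'a set" where
  "fin_ord G = {x \<in> carrier G. \<exists>n::nat. n > 0 \<and> x [^]\<^bsub>G\<^esub> n = \<one>\<^bsub>G\<^esub>}"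

definition fin_cen :: "('a, 'b) monoid_scheme \<Rightarrow> 'a set" where
  "fin_cen G = {x \<in> fin_ord G. \<forall>y \<in> fin_ord G - {x}. pow_adj G x y}"

definition pow_cnbhd :: "('a, 'b) monoid_scheme \<Rightarrow> 'a \<Rightarrow> 'a set" where
  "pow_cnbhd G x = {x} \<union> {y. pow_adj G x y}"

definition fin_cnbhd :: "('a, 'b) monoid_scheme \<Rightarrow> 'a \<Rightarrow> 'a set" where
  "fin_cnbhd G x = {x} \<union> {y \<in> fin_ord G. pow_adj G x y}"

definition epow_cnbhd :: "('a, 'b) monoid_scheme \<Rightarrow> 'a \<Rightarrow> 'a set" where
  "epow_cnbhd G x = {x} \<union> {y. epow_adj G x y}"

text \<open>The \<equiv>-class (same closed neighbourhood in the finite-order component)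
  and the \<approx>-class (same cyclic subgroup).\<close>
definition equiv_class :: "('a, 'b) monoid_scheme \<Rightarrow> 'a \<Rightarrow> 'a set" where
  "equiv_class G x = {y \<in> fin_ord G. fin_cnbhd G y = fin_cnbhd G x}"

definition approx_class :: "('a, 'b) monoid_scheme \<Rightarrow> 'a \<Rightarrow> 'a set" where
  "approx_class G x = {y \<in> fin_ord G. generate G {y} = generate G {x}}"

end

theory Submission
  imports Defs "HOL-Number_Theory.Cong"
begin

(* Call y a twin of x if both have finite order, they are comparable (one lies in the cyclic
   group generated by the other) with exactly the same elements of finite order, and
   <x> and <y> differ; an equiv-class that is not a single approx-class provides a twin.
   Then x is not 1, as otherwise y would lie in the centre of the finite-order component.
   Now let x and w be powers of z. Then z has finite order and is comparable with x, hence
   with y. If z lies in <y>, then so does w, which is thus comparable with y and hence with x.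
   If y lies in <z>, everything happens inside the cyclic group <z> of order N, where
   comparability of z^i and z^j is comparability of gcd(i,N) and gcd(j,N) in the divisor
   lattice of N. There, if a properly divides c and both are comparable with the same
   divisors, then a is comparable with every divisor b: otherwise gcd(c,b) divides a and
   c divides lcm(a,b), which forces c to divide a. *)

lemma dvd_of_dvd_lcm_of_gcd_dvd:
  fixes u y b :: int
  assumes "u dvd lcm y b" "gcd u b dvd y" "y dvd u" "0 < y" "0 < b"
  shows "u dvd y"
proof -
  obtain t where t: "u = y * t" using assms(3) by blast
  have "lcm y b * gcd y b = y * b" using assms(4,5) by simp
  moreover have "u * gcd y b dvd lcm y b * gcd y b"
    using assms(1) by (rule mult_dvd_mono) simp
  ultimately have "y * (t * gcd y b) dvd y * b" unfolding t by (simp add: mult.assoc)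
  then have tg_b: "t * gcd y b dvd b" using assms(4) by simp
  have "t * gcd y b dvd u" unfolding t by (simp add: mult.commute mult_dvd_mono)
  with tg_b have "t * gcd y b dvd y" using assms(2) by (meson dvd_trans gcd_greatest)
  with tg_b have "t * gcd y b dvd 1 * gcd y b" by simp
  then have "t dvd 1" using assms(4) by (subst (asm) dvd_mult_cancel_right) auto
  then show ?thesis using t by simp
qed

lemma cong_solvable_iff_gcd_dvd:
  fixes i j n :: int
  shows "(\<exists>k. [j * k = i] (mod n)) \<longleftrightarrow> gcd j n dvd i"
proof
  assume "\<exists>k. [j * k = i] (mod n)"
  then obtain k where "[j * k = i] (mod gcd j n)"
    using cong_dvd_modulus gcd_dvd2 by blast
  then show "gcd j n dvd i" using cong_dvd_iff by fastforce
qed (rule cong_solve_dvd_int)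

lemma divisor_comparable_of_strict_dvd_twin:
  fixes a b c n :: int
  assumes pos: "0 < a" "0 < b" "0 < c" and "a dvd c" "a \<noteq> c" "b dvd n" "c dvd n"
    and twin: "\<And>e. e dvd n \<Longrightarrow> 0 < e \<Longrightarrow> (e dvd a \<or> a dvd e) \<longleftrightarrow> (e dvd c \<or> c dvd e)"
  shows "a dvd b \<or> b dvd a"
proof (rule ccontr)
  assume incomparable: "\<not> (a dvd b \<or> b dvd a)"
  have "gcd c b dvd n" using \<open>b dvd n\<close> by (rule dvd_trans[OF gcd_dvd2])
  then have "gcd c b dvd a \<or> a dvd gcd c b" using twin[of "gcd c b"] pos by simp
  moreover have "\<not> a dvd gcd c b" using incomparable dvd_trans[OF _ gcd_dvd2] by blast
  ultimately have gcd_dvd_a: "gcd c b dvd a" by blast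
  have "lcm a b dvd n"
    using lcm_least[OF dvd_trans[OF \<open>a dvd c\<close> \<open>c dvd n\<close>] \<open>b dvd n\<close>] .
  moreover have "\<not> lcm a b dvd c"
  proof
    assume "lcm a b dvd c"
    then have "b dvd gcd c b" using dvd_trans[OF dvd_lcm2] by simp
    then show False using gcd_dvd_a incomparable dvd_trans by blast
  qed
  moreover have "0 < lcm a b" using pos by (simp add: lcm_pos_int)
  ultimately have "c dvd lcm a b" using twin[of "lcm a b"] dvd_lcm1[of a b] by blast
  then have "c dvd a"
    using gcd_dvd_a \<open>a dvd c\<close> pos(1,2) by (rule dvd_of_dvd_lcm_of_gcd_dvd)
  with \<open>a dvd c\<close> have "a = c" using pos by (intro zdvd_antisym_nonneg) auto
  with \<open>a \<noteq> c\<close> show False ..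
qed

lemma divisor_comparable_of_twin:
  fixes a b c n :: int
  assumes pos: "0 < a" "0 < b" "0 < c" and "a dvd c \<or> c dvd a" "a \<noteq> c" "b dvd n"
    "a dvd n" "c dvd n"
    and twin: "\<And>e. e dvd n \<Longrightarrow> 0 < e \<Longrightarrow> (e dvd a \<or> a dvd e) \<longleftrightarrow> (e dvd c \<or> c dvd e)"
  shows "a dvd b \<or> b dvd a"
  using assms(4)
proof
  assume "a dvd c"
  then show ?thesis using divisor_comparable_of_strict_dvd_twin assms by blast
next
  assume "c dvd a"
  then have "c dvd b \<or> b dvd c"
    using divisor_comparable_of_strict_dvd_twin[of c b a n] assms by metis
  then show ?thesis using twin[of b] assms by blast
qed

definition pow_comparable :: "('a, 'b) monoid_scheme \<Rightarrow> 'a \<Rightarrow> 'a \<Rightarrow> bool" where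
  "pow_comparable G u v \<longleftrightarrow> u \<in> generate G {v} \<or> v \<in> generate G {u}"

context group
begin

lemma fin_ord_iff: "v \<in> fin_ord G \<longleftrightarrow> v \<in> carrier G \<and> 0 < ord v"
proof -
  have "(\<exists>n::nat. 0 < n \<and> v [^] n = \<one>) \<longleftrightarrow> 0 < ord v" if "v \<in> carrier G"
    using that pow_eq_id pow_ord_eq_1 by (metis dvd_0_left gr0I less_numeral_extra(3))
  then show ?thesis unfolding fin_ord_def by blast
qed

lemma mem_generate_singleton_iff:
  "v \<in> carrier G \<Longrightarrow> u \<in> generate G {v} \<longleftrightarrow> (\<exists>k::int. u = v [^] k)"
  using generate_pow by auto

lemma mem_generate_singleton_iff_subset:
  assumes "u \<in> carrier G" "v \<in> carrier G"
  shows "u \<in> generate G {v} \<longleftrightarrow> generate G {u} \<subseteq> generate G {v}"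
  using generate_subgroup_incl[of "{u}" "generate G {v}"] generate_is_subgroup[of "{v}"]
    generate.incl[of u "{u}"] assms
  by auto

lemma pow_comparable_iff_generate_subset:
  "u \<in> carrier G \<Longrightarrow> v \<in> carrier G \<Longrightarrow> pow_comparable G u v \<longleftrightarrow>
     generate G {u} \<subseteq> generate G {v} \<or> generate G {v} \<subseteq> generate G {u}"
  unfolding pow_comparable_def by (simp add: mem_generate_singleton_iff_subset)

lemma pow_comparable_refl: "v \<in> carrier G \<Longrightarrow> pow_comparable G v v"
  unfolding pow_comparable_def by (simp add: generate.incl)

lemma fin_ord_of_pow:
  assumes "z \<in> carrier G" "z [^] (n::int) \<in> fin_ord G" "n \<noteq> 0"
  shows "z \<in> fin_ord G"
proof -
  have "z [^] (n * int (ord (z [^] n))) = \<one>"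
    using assms(1) by (simp flip: int_pow_pow add: int_pow_eq_id)
  then have "int (ord z) dvd n * int (ord (z [^] n))"
    using assms(1) int_pow_eq_id by blast
  moreover have "n * int (ord (z [^] n)) \<noteq> 0"
    using assms(2,3) fin_ord_iff by simp
  ultimately show ?thesis using assms(1) fin_ord_iff by (cases "ord z") auto
qed

lemma fin_ord_generate:
  assumes "v \<in> fin_ord G" "u \<in> generate G {v}"
  shows "u \<in> fin_ord G"
proof -
  have v: "v \<in> carrier G" "0 < ord v" using assms(1) fin_ord_iff by auto
  obtain k :: int where u: "u = v [^] k" using assms(2) v(1) mem_generate_singleton_iff by blast
  have "u [^] int (ord v) = v [^] (k * int (ord v))"
    using v(1) by (simp add: u int_pow_pow)
  also have "\<dots> = \<one>"
    using v(1) by (simp add: int_pow_eq_id)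
  finally have "u [^] ord v = \<one>" by (simp add: int_pow_int)
  moreover have "u \<in> carrier G" using v(1) by (simp add: u)
  ultimately show ?thesis using v(2) unfolding fin_ord_def by blast
qed

lemma mem_generate_fin_ord_iff:
  assumes "v \<in> fin_ord G"
  shows "u \<in> generate G {v} \<longleftrightarrow> (\<exists>n::int. n \<noteq> 0 \<and> u = v [^] n)"
proof
  assume "u \<in> generate G {v}"
  have v: "v \<in> carrier G" "0 < ord v" using assms fin_ord_iff by auto
  then obtain k :: int where u: "u = v [^] k"
    using \<open>u \<in> generate G {v}\<close> mem_generate_singleton_iff by blast
  show "\<exists>n::int. n \<noteq> 0 \<and> u = v [^] n"
  proof (cases "k = 0")
    case True
    then have "u = v [^] int (ord v)"
      using v(1) int_pow_eq_id[of v "int (ord v)"] by (simp add: u)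
    then show ?thesis using v(2) by (intro exI[of _ "int (ord v)"]) simp
  next
    case False
    then show ?thesis using u by blast
  qed
next
  assume "\<exists>n::int. n \<noteq> 0 \<and> u = v [^] n"
  then show "u \<in> generate G {v}" using assms fin_ord_iff mem_generate_singleton_iff by blast
qed

lemma pow_adj_fin_ord_iff:
  assumes "u \<in> fin_ord G" "v \<in> fin_ord G"
  shows "pow_adj G v u \<longleftrightarrow> v \<noteq> u \<and> pow_comparable G u v"
  using assms fin_ord_iff
  unfolding pow_adj_def pow_comparable_def mem_generate_fin_ord_iff[OF assms(1)]
    mem_generate_fin_ord_iff[OF assms(2)]
  by blast

lemma fin_cnbhd_iff:
  assumes "u \<in> fin_ord G" "v \<in> fin_ord G"
  shows "u \<in> fin_cnbhd G v \<longleftrightarrow> pow_comparable G u v"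
  using pow_adj_fin_ord_iff[OF assms] assms pow_comparable_refl[of v] fin_ord_iff
  unfolding fin_cnbhd_def by auto

lemma fin_cnbhd_eq_iff:
  assumes "v \<in> fin_ord G" "w \<in> fin_ord G"
  shows "fin_cnbhd G v = fin_cnbhd G w \<longleftrightarrow>
    (\<forall>u \<in> fin_ord G. pow_comparable G u v \<longleftrightarrow> pow_comparable G u w)"
proof -
  have "fin_cnbhd G v \<subseteq> fin_ord G" "fin_cnbhd G w \<subseteq> fin_ord G"
    using assms unfolding fin_cnbhd_def by auto
  then have "fin_cnbhd G v = fin_cnbhd G w \<longleftrightarrow>
      (\<forall>u \<in> fin_ord G. u \<in> fin_cnbhd G v \<longleftrightarrow> u \<in> fin_cnbhd G w)"
    by blast
  then show ?thesis using fin_cnbhd_iff[OF _ assms(1)] fin_cnbhd_iff[OF _ assms(2)] by blast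
qed

lemma fin_cen_eq: "fin_cen G = {v \<in> fin_ord G. \<forall>u \<in> fin_ord G. pow_comparable G u v}"
proof -
  have "(\<forall>u \<in> fin_ord G - {v}. pow_adj G v u) \<longleftrightarrow> (\<forall>u \<in> fin_ord G. pow_comparable G u v)"
    if "v \<in> fin_ord G" for v
    using pow_adj_fin_ord_iff[OF _ that] pow_comparable_refl that fin_ord_iff by blast
  then show ?thesis unfolding fin_cen_def by blast
qed

lemma fin_cen_eq_one_if_card_one:
  assumes "card (fin_cen G) = 1"
  shows "fin_cen G = {\<one>}"
proof -
  have "\<one> \<in> fin_ord G" using fin_ord_iff by simp
  then have "\<one> \<in> fin_cen G"
    unfolding fin_cen_eq pow_comparable_def using generate.one by blast
  then show ?thesis using assms by (metis card_1_singletonE singletonD)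
qed

lemma pow_mem_generate_pow_iff:
  assumes "z \<in> carrier G" "0 < ord z"
  shows "z [^] (i::int) \<in> generate G {z [^] (j::int)} \<longleftrightarrow> gcd j (int (ord z)) dvd i"
proof -
  have "z [^] i \<in> generate G {z [^] j} \<longleftrightarrow> (\<exists>k. z [^] i = z [^] (j * k))"
    using assms(1) by (simp add: mem_generate_singleton_iff int_pow_pow)
  also have "\<dots> \<longleftrightarrow> (\<exists>k. [j * k = i] (mod int (ord z)))"
    by (simp add: int_pow_eq[OF assms(1)] cong_iff_dvd_diff)
  finally show ?thesis by (simp add: cong_solvable_iff_gcd_dvd)
qed

lemma pow_comparable_pow_iff:
  assumes "z \<in> carrier G" "0 < ord z"
  shows "pow_comparable G (z [^] (i::int)) (z [^] (j::int)) \<longleftrightarrow>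
    gcd i (int (ord z)) dvd gcd j (int (ord z)) \<or> gcd j (int (ord z)) dvd gcd i (int (ord z))"
  using assms by (auto simp: pow_comparable_def pow_mem_generate_pow_iff)

lemma pow_adj_imp_epow_adj:
  assumes "pow_adj G x w"
  shows "epow_adj G x w"
proof -
  have x: "x \<in> carrier G" and w: "w \<in> carrier G" and "x \<noteq> w"
    using assms by (auto simp: pow_adj_def)
  moreover have "x = x [^] (1::int)" "w = w [^] (1::int)" using x w by simp_all
  ultimately show ?thesis using assms unfolding pow_adj_def epow_adj_def by blast
qed

lemma twins_in_cyclic_subgroup:
  assumes z: "z \<in> fin_ord G"
    and gen: "x \<in> generate G {z}" "y \<in> generate G {z}" "w \<in> generate G {z}"
    and twin: "\<And>u. u \<in> fin_ord G \<Longrightarrow> pow_comparable G u x \<longleftrightarrow> pow_comparable G u y"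
    and distinct: "generate G {x} \<noteq> generate G {y}"
  shows "pow_comparable G w x"
proof -
  define N where "N = int (ord z)"
  have zc: "z \<in> carrier G" and "0 < N" using z fin_ord_iff by (auto simp: N_def)
  obtain i j k :: int where x: "x = z [^] i" and y: "y = z [^] j" and w: "w = z [^] k"
    using gen zc mem_generate_singleton_iff by meson
  have comparable_iff: "pow_comparable G (z [^] e) (z [^] f) \<longleftrightarrow>
      gcd e N dvd gcd f N \<or> gcd f N dvd gcd e N" for e f :: int
    using pow_comparable_pow_iff[OF zc] \<open>0 < N\<close> by (simp add: N_def)
  have "pow_comparable G y x"
    using twin[of y] pow_comparable_refl fin_ord_generate[OF z gen(2)] fin_ord_iff by blast
  then have comparable: "gcd i N dvd gcd j N \<or> gcd j N dvd gcd i N"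
    unfolding x y comparable_iff by blast
  have distinct_gcd: "gcd i N \<noteq> gcd j N"
  proof
    assume "gcd i N = gcd j N"
    then have "gcd j N dvd i" "gcd i N dvd j" by (metis gcd_dvd1)+
    then have "x \<in> generate G {y}" "y \<in> generate G {x}"
      unfolding x y using pow_mem_generate_pow_iff[OF zc] \<open>0 < N\<close> by (simp_all add: N_def)
    then show False
      using distinct mem_generate_singleton_iff_subset zc x y by auto
  qed
  have twin_gcd: "(e dvd gcd i N \<or> gcd i N dvd e) \<longleftrightarrow> (e dvd gcd j N \<or> gcd j N dvd e)"
    if "e dvd N" "0 < e" for e
  proof -
    have e: "gcd e N = e" using that by simp
    have "z [^] e \<in> fin_ord G"
      using fin_ord_generate[OF z] zc mem_generate_singleton_iff by blast
    then have "pow_comparable G (z [^] e) x \<longleftrightarrow> pow_comparable G (z [^] e) y"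
      by (rule twin)
    then show ?thesis unfolding x y comparable_iff e .
  qed
  have "0 < gcd i N" "0 < gcd k N" "0 < gcd j N" using \<open>0 < N\<close> by simp_all
  then have "gcd i N dvd gcd k N \<or> gcd k N dvd gcd i N"
    using comparable distinct_gcd gcd_dvd2 gcd_dvd2 gcd_dvd2 twin_gcd
    by (rule divisor_comparable_of_twin)
  then show ?thesis unfolding x w comparable_iff by blast
qed

lemma epow_adj_imp_pow_adj_of_twin:
  assumes x: "x \<in> fin_ord G" "x \<noteq> \<one>" and y: "y \<in> fin_ord G"
    and twin: "\<And>u. u \<in> fin_ord G \<Longrightarrow> pow_comparable G u x \<longleftrightarrow> pow_comparable G u y"
    and distinct: "generate G {x} \<noteq> generate G {y}"
    and "epow_adj G x w"
  shows "pow_adj G x w"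
proof -
  obtain z and n m :: int where zc: "z \<in> carrier G" and "x \<noteq> w"
    and xz: "x = z [^] n" and wz: "w = z [^] m"
    using \<open>epow_adj G x w\<close> unfolding epow_adj_def by blast
  have "n \<noteq> 0" using xz x(2) by auto
  then have z: "z \<in> fin_ord G" using fin_ord_of_pow zc x(1) xz by blast
  have x_gen: "x \<in> generate G {z}" and w_gen: "w \<in> generate G {z}"
    using xz wz zc mem_generate_singleton_iff by blast+
  have w: "w \<in> fin_ord G" using fin_ord_generate[OF z w_gen] .
  have "pow_comparable G z y" using twin[OF z] x_gen by (simp add: pow_comparable_def)
  then consider "z \<in> generate G {y}" | "y \<in> generate G {z}"
    unfolding pow_comparable_def by blast
  then have "pow_comparable G w x"
  proof cases
    case 1
    then have "w \<in> generate G {y}"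
      using w_gen zc y fin_ord_iff mem_generate_singleton_iff_subset by blast
    then show ?thesis using twin[OF w] by (simp add: pow_comparable_def)
  next
    case 2
    then show ?thesis using twins_in_cyclic_subgroup[OF z x_gen _ w_gen twin distinct] by blast
  qed
  then show ?thesis using pow_adj_fin_ord_iff[OF w x(1)] \<open>x \<noteq> w\<close> by blast
qed

lemma twin_ne_one:
  assumes "fin_cen G = {\<one>}" and x: "x \<in> fin_ord G" and y: "y \<in> fin_ord G"
    and twin: "\<And>u. u \<in> fin_ord G \<Longrightarrow> pow_comparable G u x \<longleftrightarrow> pow_comparable G u y"
    and distinct: "generate G {x} \<noteq> generate G {y}"
  shows "x \<noteq> \<one>"
proof
  assume "x = \<one>"
  then have "\<forall>u \<in> fin_ord G. pow_comparable G u y"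
    using twin generate.one by (auto simp: pow_comparable_def)
  then have "y = \<one>" using assms(1) y unfolding fin_cen_eq by blast
  with \<open>x = \<one>\<close> show False using distinct by simp
qed

lemma approx_class_subset_equiv_class:
  assumes x: "x \<in> fin_ord G"
  shows "approx_class G x \<subseteq> equiv_class G x"
proof
  fix y assume "y \<in> approx_class G x"
  then have y: "y \<in> fin_ord G" and "generate G {y} = generate G {x}"
    by (auto simp: approx_class_def)
  then have "pow_comparable G u y \<longleftrightarrow> pow_comparable G u x" if "u \<in> fin_ord G" for u
    using that x fin_ord_iff pow_comparable_iff_generate_subset by metis
  then show "y \<in> equiv_class G x"
    using y x fin_cnbhd_eq_iff by (simp add: equiv_class_def)
qed

lemma twin_of_equiv_class_neq_approx_class:
  assumes x: "x \<in> fin_ord G" and "equiv_class G x \<noteq> approx_class G x"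
  obtains y where "y \<in> fin_ord G"
    "\<And>u. u \<in> fin_ord G \<Longrightarrow> pow_comparable G u x \<longleftrightarrow> pow_comparable G u y"
    "generate G {x} \<noteq> generate G {y}"
proof -
  obtain y where "y \<in> equiv_class G x" "y \<notin> approx_class G x"
    using assms approx_class_subset_equiv_class by blast
  then have y: "y \<in> fin_ord G" "fin_cnbhd G x = fin_cnbhd G y"
    and "generate G {y} \<noteq> generate G {x}"
    by (auto simp: equiv_class_def approx_class_def)
  then show ?thesis
    using that[OF y(1) _ not_sym] fin_cnbhd_eq_iff[OF x y(1)] by blast
qed

end

theorem mainTheorem1:
  fixes G :: "('a, 'b) monoid_scheme" and x :: 'a
  assumes "group G"
    and "card (fin_cen G) = 1"
    and "x \<in> fin_ord G"
    and "equiv_class G x \<noteq> approx_class G x"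
  shows "pow_cnbhd G x = epow_cnbhd G x"
proof -
  interpret group G by fact
  obtain y where y: "y \<in> fin_ord G"
    and twin: "\<And>u. u \<in> fin_ord G \<Longrightarrow> pow_comparable G u x \<longleftrightarrow> pow_comparable G u y"
    and distinct: "generate G {x} \<noteq> generate G {y}"
    using twin_of_equiv_class_neq_approx_class assms(3,4) by blast
  have "x \<noteq> \<one>\<^bsub>G\<^esub>"
    using twin_ne_one fin_cen_eq_one_if_card_one assms(2,3) y twin distinct by blast
  then have "pow_adj G x w \<longleftrightarrow> epow_adj G x w" for w
    using pow_adj_imp_epow_adj epow_adj_imp_pow_adj_of_twin assms(3) y twin distinct by blast
  then show ?thesis unfolding pow_cnbhd_def epow_cnbhd_def by blast
qed

end
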